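(* Let $\alpha=1.56$ and define, for $x\in[0,1]$, $\mathrm{budget}^+(x)=\frac{\alpha}{1-\alpha/2}\cdot\frac{x^2}{1+x}$ and $\mathrm{budget}^-(x)=\frac{\alpha}{1-\alpha/2}\cdot\frac{(1+2x)(1-x)}{2(1+x)}$. Let $(z,x)$ be a feasible solution of the cluster LP for a Correlation Clustering instance $(V,E^+\uplus E^-)$. For $vw\in\binom V2$ let $b_{vw}=\mathrm{budget}^+(x_{vw})$ if $vw\in E^+$ and $b_{vw}=\mathrm{budget}^-(x_{vw})$ if $vw\in E^-$. For $V'\subseteq V$ and a pivot $u\in V'$, define the random cluster $C\subseteq V'$ as follows: start with $C=\{u\}$; sample a set $S\ni u$ with probability $z_S$; for each $v\in V'$ with $uv\in E^+$, add $v$ to $C$ if $x_{uv}\le 0.4$, and otherwise add $v$ to $C$ if and only if $v\in S$; for each $v\in V'$ with $uv\in E^-$, add $v$ to $C$ with probability $1-x_{uv}$, independently of everything else. For distinct $u,v,w\in V'$ let $\mathrm{cost}_u(v,w)$ be the probability (with pivot $u$) that either $vw\in E^+$ and $|C\cap\{v,w\}|=1$, or $vw\in E^-$ and $\{v,w\}\subseteq C$; and let $\Delta_u(v,w)=\Pr[C\cap\{v,w\}\neq\emptyset]\cdot b_{vw}$ (with pivot $u$). (These quantities do not depend on $V'$ as long as $u,v,w\in V'$.) For a triangle $T=\{u,v,w\}$ of three distinct vertices let $\mathrm{cost}(T)=\mathrm{cost}_u(v,w)+\mathrm{cost}_v(u,w)+\mathrm{cost}_w(u,v)$ and $\Delta(T)=\Delta_u(v,w)+\Delta_v(u,w)+\Delta_w(u,v)$.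 Then $\mathrm{cost}(T)\le\Delta(T)$ for every triangle $T$.
   Context: A Correlation Clustering instance consists of a finite vertex set $V$ and a partition $E^+\uplus E^-=\binom V2$ of the unordered pairs of distinct vertices into $+$edges and $-$edges. The cluster LP has a variable $z_S$ for every nonempty $S\subseteq V$ and $x_{uv}$ for every $uv\in\binom V2$, with constraints $\sum_{S\ni u}z_S=1$ for all $u\in V$, $\sum_{S\supseteq\{u,v\}}z_S=1-x_{uv}$ for all $uv$, and $z_S\ge0$; in particular $(z_S)_{S\ni u}$ is a probability distribution for each $u$. *)

theory Defs
  imports Complex_Main
begin

text \<open>Correlation clustering: vertex set V, the +edges Ep are a set of
  unordered pairs {u,v} (u \<noteq> v); every other pair of distinct vertices is a -edge.\<close>

definition cluster_LP_feasible ::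
  "'a set \<Rightarrow> ('a set \<Rightarrow> real) \<Rightarrow> ('a set \<Rightarrow> real) \<Rightarrow> bool" where
  "cluster_LP_feasible V z x \<longleftrightarrow>
     (\<forall>S. S \<subseteq> V \<and> S \<noteq> {} \<longrightarrow> z S \<ge> 0) \<and>
     (\<forall>u\<in>V. (\<Sum>S\<in>{S. S \<subseteq> V \<and> u \<in> S}. z S) = 1) \<and>
     (\<forall>u\<in>V. \<forall>v\<in>V. u \<noteq> v \<longrightarrow>
        (\<Sum>S\<in>{S. S \<subseteq> V \<and> {u,v} \<subseteq> S}. z S) = 1 - x {u,v})"

definition alpha :: real where "alpha = 156/100"

definition budget_plus :: "real \<Rightarrow> real" where
  "budget_plus t = alpha / (1 - alpha/2) * (t\<^sup>2 / (1 + t))"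

definition budget_minus :: "real \<Rightarrow> real" where
  "budget_minus t = alpha / (1 - alpha/2) * ((1 + 2*t) * (1 - t) / (2 * (1 + t)))"

definition budget :: "'a set set \<Rightarrow> ('a set \<Rightarrow> real) \<Rightarrow> 'a \<Rightarrow> 'a \<Rightarrow> real" where
  "budget Ep x v w = (if {v,w} \<in> Ep then budget_plus (x {v,w}) else budget_minus (x {v,w}))"

text \<open>Probability that v joins the cluster of pivot u, conditioned on the sampled set S.
  Conditioned on S, the memberships of distinct non-pivot vertices are independent.\<close>
definition incl_prob :: "'a set set \<Rightarrow> ('a set \<Rightarrow> real) \<Rightarrow> 'a \<Rightarrow> 'a set \<Rightarrow> 'a \<Rightarrow> real" where
  "incl_prob Ep x u S v =
     (if {u,v} \<in> Ep then (if x {u,v} \<le> 2/5 \<or> v \<in> S then 1 else 0)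
      else 1 - x {u,v})"

definition cost_piv ::
  "'a set \<Rightarrow> 'a set set \<Rightarrow> ('a set \<Rightarrow> real) \<Rightarrow> ('a set \<Rightarrow> real) \<Rightarrow> 'a \<Rightarrow> 'a \<Rightarrow> 'a \<Rightarrow> real" where
  "cost_piv V Ep z x u v w =
     (\<Sum>S\<in>{S. S \<subseteq> V \<and> u \<in> S}. z S *
        (let pv = incl_prob Ep x u S v; pw = incl_prob Ep x u S w in
         if {v,w} \<in> Ep then pv * (1 - pw) + (1 - pv) * pw else pv * pw))"

definition delta_piv ::
  "'a set \<Rightarrow> 'a set set \<Rightarrow> ('a set \<Rightarrow> real) \<Rightarrow> ('a set \<Rightarrow> real) \<Rightarrow> 'a \<Rightarrow> 'a \<Rightarrow> 'a \<Rightarrow> real" where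
  "delta_piv V Ep z x u v w =
     (\<Sum>S\<in>{S. S \<subseteq> V \<and> u \<in> S}. z S *
        (1 - (1 - incl_prob Ep x u S v) * (1 - incl_prob Ep x u S w))) * budget Ep x v w"

definition cost_tri ::
  "'a set \<Rightarrow> 'a set set \<Rightarrow> ('a set \<Rightarrow> real) \<Rightarrow> ('a set \<Rightarrow> real) \<Rightarrow> 'a \<Rightarrow> 'a \<Rightarrow> 'a \<Rightarrow> real" where
  "cost_tri V Ep z x u v w =
     cost_piv V Ep z x u v w + cost_piv V Ep z x v u w + cost_piv V Ep z x w u v"

definition delta_tri ::
  "'a set \<Rightarrow> 'a set set \<Rightarrow> ('a set \<Rightarrow> real) \<Rightarrow> ('a set \<Rightarrow> real) \<Rightarrow> 'a \<Rightarrow> 'a \<Rightarrow> 'a \<Rightarrow> real" where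
  "delta_tri V Ep z x u v w =
     delta_piv V Ep z x u v w + delta_piv V Ep z x v u w + delta_piv V Ep z x w u v"

end

theory Submission
  imports Defs
begin

text \<open>Fix a pivot u. Given the sampled set S, the memberships of v and w in the cluster are
  independent, so averaging over S leaves only three numbers: the LP values x_uv, x_uw and the
  mass t of the sets containing the whole triangle. Hence cost_u(v,w) and Delta_u(v,w) are
  polynomials in x_uv, x_uw and t, determined by the kinds of the three edges (a -edge, a +edge
  with x <= 2/5, or a +edge with x > 2/5). The cluster LP and these kinds confine (x_uv, x_uw,
  x_vw, t) to a polytope, and after clearing the denominators 1 + x of the budgets the inequality
  cost(T) <= Delta(T) says that a polynomial is nonpositive on this polytope, for each of the ten
  kind patterns up to symmetry. Each of these is certified by writing the negated polynomial as a
  nonnegative combination of products of the nonnegative linear forms cutting out the polytope.\<close>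

section \<open>Averaging over the sampled set\<close>

datatype edge_kind = Minus | Short_plus | Long_plus

definition kind_of :: "'a set set \<Rightarrow> ('a set \<Rightarrow> real) \<Rightarrow> 'a set \<Rightarrow> edge_kind" where
  "kind_of Ep x e = (if e \<in> Ep then if x e \<le> 2/5 then Short_plus else Long_plus else Minus)"

lemma kind_of_eq_Minus_iff: "kind_of Ep x e = Minus \<longleftrightarrow> e \<notin> Ep"
  by (simp add: kind_of_def)

fun join_prob :: "edge_kind \<Rightarrow> real \<Rightarrow> bool \<Rightarrow> real" where
  "join_prob Minus x b = 1 - x"
| "join_prob Short_plus x b = 1"
| "join_prob Long_plus x b = of_bool b"

lemma incl_prob_eq_join_prob:
  "incl_prob Ep x u S v = join_prob (kind_of Ep x {u, v}) (x {u, v}) (v \<in> S)"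
  by (simp add: incl_prob_def kind_of_def)

fun join_marginal :: "edge_kind \<Rightarrow> real \<Rightarrow> real" where
  "join_marginal Short_plus x = 1"
| "join_marginal _ x = 1 - x"

fun both_join :: "edge_kind \<Rightarrow> edge_kind \<Rightarrow> real \<Rightarrow> real \<Rightarrow> real \<Rightarrow> real" where
  "both_join Long_plus Long_plus x1 x2 t = t"
| "both_join k1 k2 x1 x2 t = join_marginal k1 x1 * join_marginal k2 x2"

definition pivot_cost :: "edge_kind \<Rightarrow> edge_kind \<Rightarrow> edge_kind \<Rightarrow> real \<Rightarrow> real \<Rightarrow> real \<Rightarrow> real" where
  "pivot_cost k1 k2 k3 x1 x2 t =
     (if k3 = Minus then both_join k1 k2 x1 x2 t
      else join_marginal k1 x1 + join_marginal k2 x2 - 2 * both_join k1 k2 x1 x2 t)"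

definition hit_prob :: "edge_kind \<Rightarrow> edge_kind \<Rightarrow> real \<Rightarrow> real \<Rightarrow> real \<Rightarrow> real" where
  "hit_prob k1 k2 x1 x2 t = join_marginal k1 x1 + join_marginal k2 x2 - both_join k1 k2 x1 x2 t"

locale pivot_sample =
  fixes F :: "'a set set" and z :: "'a set \<Rightarrow> real"
    and v w :: 'a and xv xw t :: real
  assumes nonneg: "\<And>S. S \<in> F \<Longrightarrow> 0 \<le> z S"
    and total: "(\<Sum>S\<in>F. z S) = 1"
    and mass_v: "(\<Sum>S\<in>F. z S * of_bool (v \<in> S)) = 1 - xv"
    and mass_w: "(\<Sum>S\<in>F. z S * of_bool (w \<in> S)) = 1 - xw"
    and mass_vw: "(\<Sum>S\<in>F. z S * (of_bool (v \<in> S) * of_bool (w \<in> S))) = t"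
begin

lemma sum_join_prob_v: "(\<Sum>S\<in>F. z S * join_prob k xv (v \<in> S)) = join_marginal k xv"
  by (cases k) (simp_all add: total mass_v flip: sum_distrib_right)

lemma sum_join_prob_w: "(\<Sum>S\<in>F. z S * join_prob k xw (w \<in> S)) = join_marginal k xw"
  by (cases k) (simp_all add: total mass_w flip: sum_distrib_right)

lemma sum_join_prob_product:
  "(\<Sum>S\<in>F. z S * (join_prob k1 xv (v \<in> S) * join_prob k2 xw (w \<in> S))) = both_join k1 k2 xv xw t"
proof (cases "k1 = Long_plus \<and> k2 = Long_plus")
  case True
  then show ?thesis using mass_vw by simp
next
  case False
  then have both: "both_join k1 k2 xv xw t = join_marginal k1 xv * join_marginal k2 xw"
    by (cases k1; cases k2) simp_all
  from False consider "k1 \<noteq> Long_plus" | "k2 \<noteq> Long_plus" by blast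
  then show ?thesis
  proof cases
    case 1
    then have "join_prob k1 xv b = join_marginal k1 xv" for b by (cases k1) simp_all
    then show ?thesis
      by (simp add: both mult.left_commute[of "z _"] flip: sum_join_prob_w sum_distrib_left)
  next
    case 2
    then have "join_prob k2 xw b = join_marginal k2 xw" for b by (cases k2) simp_all
    then show ?thesis
      by (simp add: both flip: mult.assoc sum_join_prob_v sum_distrib_right)
  qed
qed

lemma sum_cut_prob:
  "(\<Sum>S\<in>F. z S * (join_prob k1 xv (v \<in> S) * (1 - join_prob k2 xw (w \<in> S))
      + (1 - join_prob k1 xv (v \<in> S)) * join_prob k2 xw (w \<in> S)))
   = join_marginal k1 xv + join_marginal k2 xw - 2 * both_join k1 k2 xv xw t"
proof -
  have "(\<Sum>S\<in>F. z S * (p S * (1 - q S) + (1 - p S) * q S))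
      = (\<Sum>S\<in>F. z S * p S) + (\<Sum>S\<in>F. z S * q S) - 2 * (\<Sum>S\<in>F. z S * (p S * q S))"
    for p q :: "'a set \<Rightarrow> real"
    by (simp add: algebra_simps sum.distrib sum_subtractf sum_distrib_left)
  then show ?thesis by (simp add: sum_join_prob_v sum_join_prob_w sum_join_prob_product)
qed

lemma sum_hit_prob:
  "(\<Sum>S\<in>F. z S * (1 - (1 - join_prob k1 xv (v \<in> S)) * (1 - join_prob k2 xw (w \<in> S))))
   = hit_prob k1 k2 xv xw t"
proof -
  have "(\<Sum>S\<in>F. z S * (1 - (1 - p S) * (1 - q S)))
      = (\<Sum>S\<in>F. z S * p S) + (\<Sum>S\<in>F. z S * q S) - (\<Sum>S\<in>F. z S * (p S * q S))"
    for p q :: "'a set \<Rightarrow> real"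
    by (simp add: algebra_simps sum.distrib sum_subtractf sum_distrib_left)
  then show ?thesis by (simp add: hit_prob_def sum_join_prob_v sum_join_prob_w sum_join_prob_product)
qed

lemma triple_mass_bounds: "0 \<le> t" "t \<le> 1 - xv" "t \<le> 1 - xw" "1 - xv - xw \<le> t"
proof -
  define p q :: "'a set \<Rightarrow> real" where "p S = of_bool (v \<in> S)" and "q S = of_bool (w \<in> S)" for S
  have cells_nonneg: "0 \<le> a + b * (1 - xv) + c * (1 - xw) + d * t"
    if "0 \<le> a" "0 \<le> a + b" "0 \<le> a + c" "0 \<le> a + b + c + d" for a b c d
  proof -
    have "0 \<le> a + b * p S + c * q S + d * (p S * q S)" for S
      using that by (simp add: p_def q_def)
    then have "0 \<le> (\<Sum>S\<in>F. z S * (a + b * p S + c * q S + d * (p S * q S)))"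
      by (intro sum_nonneg mult_nonneg_nonneg nonneg)
    also have "\<dots> = a * (\<Sum>S\<in>F. z S) + b * (\<Sum>S\<in>F. z S * p S) + c * (\<Sum>S\<in>F. z S * q S)
        + d * (\<Sum>S\<in>F. z S * (p S * q S))"
      by (simp add: algebra_simps sum.distrib sum_distrib_left)
    also have "\<dots> = a + b * (1 - xv) + c * (1 - xw) + d * t"
      by (simp add: p_def q_def total mass_v mass_w mass_vw)
    finally show ?thesis .
  qed
  show "0 \<le> t" using cells_nonneg[of 0 0 0 1] by simp
  show "t \<le> 1 - xv" using cells_nonneg[of 0 1 0 "-1"] by simp
  show "t \<le> 1 - xw" using cells_nonneg[of 0 0 1 "-1"] by simp
  show "1 - xv - xw \<le> t" using cells_nonneg[of 1 "-1" "-1" 1] by simp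
qed

end

definition triple_mass :: "'a set \<Rightarrow> ('a set \<Rightarrow> real) \<Rightarrow> 'a \<Rightarrow> 'a \<Rightarrow> 'a \<Rightarrow> real" where
  "triple_mass V z u v w = (\<Sum>S | S \<subseteq> V \<and> {u, v, w} \<subseteq> S. z S)"

lemma pivot_sample_cluster_LP:
  assumes "finite V" and "cluster_LP_feasible V z x"
    and "u \<in> V" "v \<in> V" "w \<in> V" and "u \<noteq> v" "u \<noteq> w"
  shows "pivot_sample {S. S \<subseteq> V \<and> u \<in> S} z v w (x {u, v}) (x {u, w}) (triple_mass V z u v w)"
proof
  let ?F = "{S. S \<subseteq> V \<and> u \<in> S}"
  have fin: "finite ?F"
    by (rule finite_subset[of _ "Pow V"]) (use assms(1) in auto)
  show "0 \<le> z S" if "S \<in> ?F" for S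
  proof -
    from that have "S \<subseteq> V \<and> S \<noteq> {}" by auto
    with assms(2) show ?thesis unfolding cluster_LP_feasible_def by blast
  qed
  show "(\<Sum>S\<in>?F. z S) = 1"
    using assms(2,3) unfolding cluster_LP_feasible_def by blast
  have "?F \<inter> {S. y \<in> S} = {S. S \<subseteq> V \<and> {u, y} \<subseteq> S}" for y
    by auto
  then have pair_mass: "(\<Sum>S\<in>?F. z S * of_bool (y \<in> S)) = 1 - x {u, y}" if "y \<in> V" "u \<noteq> y" for y
    using assms(2,3) that fin unfolding cluster_LP_feasible_def by simp
  show "(\<Sum>S\<in>?F. z S * of_bool (v \<in> S)) = 1 - x {u, v}"
    using assms(4,6) by (rule pair_mass)
  show "(\<Sum>S\<in>?F. z S * of_bool (w \<in> S)) = 1 - x {u, w}"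
    using assms(5,7) by (rule pair_mass)
  have "?F \<inter> {S. v \<in> S \<and> w \<in> S} = {S. S \<subseteq> V \<and> {u, v, w} \<subseteq> S}"
    by auto
  then show "(\<Sum>S\<in>?F. z S * (of_bool (v \<in> S) * of_bool (w \<in> S))) = triple_mass V z u v w"
    using fin by (simp add: triple_mass_def flip: of_bool_conj)
qed

definition kind_budget :: "edge_kind \<Rightarrow> real \<Rightarrow> real" where
  "kind_budget k x = (if k = Minus then budget_minus x else budget_plus x)"

lemma budget_eq_kind_budget: "budget Ep x v w = kind_budget (kind_of Ep x {v, w}) (x {v, w})"
  by (simp add: budget_def kind_budget_def kind_of_def)

context
  fixes V :: "'a set" and Ep :: "'a set set" and z x u v w t
  assumes sample: "pivot_sample {S. S \<subseteq> V \<and> u \<in> S} z v w (x {u, v}) (x {u, w}) t"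
begin

interpretation pivot_sample "{S. S \<subseteq> V \<and> u \<in> S}" z v w "x {u, v}" "x {u, w}" t
  by (fact sample)

lemma cost_piv_eq_pivot_cost:
  "cost_piv V Ep z x u v w = pivot_cost (kind_of Ep x {u, v}) (kind_of Ep x {u, w}) (kind_of Ep x {v, w})
     (x {u, v}) (x {u, w}) t"
  unfolding cost_piv_def pivot_cost_def incl_prob_eq_join_prob Let_def kind_of_eq_Minus_iff
  using sum_cut_prob sum_join_prob_product by simp

lemma delta_piv_eq_hit_prob:
  "delta_piv V Ep z x u v w = hit_prob (kind_of Ep x {u, v}) (kind_of Ep x {u, w}) (x {u, v}) (x {u, w}) t
     * kind_budget (kind_of Ep x {v, w}) (x {v, w})"
  unfolding delta_piv_def incl_prob_eq_join_prob budget_eq_kind_budget sum_hit_prob ..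

end

section \<open>The inequality for one triangle\<close>

text \<open>The edges uv, uw, vw of the triangle have kinds k1, k2, k3 and LP values x1, x2, x3;
  the three summands belong to the pivots u, v and w.\<close>

definition triangle_cost ::
  "edge_kind \<Rightarrow> edge_kind \<Rightarrow> edge_kind \<Rightarrow> real \<Rightarrow> real \<Rightarrow> real \<Rightarrow> real \<Rightarrow> real" where
  "triangle_cost k1 k2 k3 x1 x2 x3 t =
     pivot_cost k1 k2 k3 x1 x2 t + pivot_cost k1 k3 k2 x1 x3 t + pivot_cost k2 k3 k1 x2 x3 t"

definition triangle_delta ::
  "edge_kind \<Rightarrow> edge_kind \<Rightarrow> edge_kind \<Rightarrow> real \<Rightarrow> real \<Rightarrow> real \<Rightarrow> real \<Rightarrow> real" where
  "triangle_delta k1 k2 k3 x1 x2 x3 t =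
     hit_prob k1 k2 x1 x2 t * kind_budget k3 x3 + hit_prob k1 k3 x1 x3 t * kind_budget k2 x2
     + hit_prob k2 k3 x2 x3 t * kind_budget k1 x1"

text \<open>The factor alpha / (1 - alpha/2) of both budgets equals 156/22.\<close>

fun budget_numerator :: "edge_kind \<Rightarrow> real \<Rightarrow> real" where
  "budget_numerator Minus x = 78 * (1 + 2 * x) * (1 - x)"
| "budget_numerator _ x = 156 * x\<^sup>2"

lemma budget_numerator_eq: "x \<noteq> -1 \<Longrightarrow> budget_numerator k x = 22 * (1 + x) * kind_budget k x"
  by (cases k) (simp_all add: kind_budget_def budget_minus_def budget_plus_def alpha_def field_simps)

definition cleared_excess ::
  "edge_kind \<Rightarrow> edge_kind \<Rightarrow> edge_kind \<Rightarrow> real \<Rightarrow> real \<Rightarrow> real \<Rightarrow> real \<Rightarrow> real" where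
  "cleared_excess k1 k2 k3 x1 x2 x3 t =
     22 * (1 + x1) * (1 + x2) * (1 + x3) * triangle_cost k1 k2 k3 x1 x2 x3 t
     - (1 + x1) * (1 + x2) * hit_prob k1 k2 x1 x2 t * budget_numerator k3 x3
     - (1 + x1) * (1 + x3) * hit_prob k1 k3 x1 x3 t * budget_numerator k2 x2
     - (1 + x2) * (1 + x3) * hit_prob k2 k3 x2 x3 t * budget_numerator k1 x1"

lemma cleared_excess_eq:
  assumes "x1 \<noteq> -1" "x2 \<noteq> -1" "x3 \<noteq> -1"
  shows "cleared_excess k1 k2 k3 x1 x2 x3 t = 22 * (1 + x1) * (1 + x2) * (1 + x3)
    * (triangle_cost k1 k2 k3 x1 x2 x3 t - triangle_delta k1 k2 k3 x1 x2 x3 t)"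
  unfolding cleared_excess_def triangle_delta_def budget_numerator_eq[OF assms(1)]
    budget_numerator_eq[OF assms(2)] budget_numerator_eq[OF assms(3)]
  by algebra

lemma triangle_cost_le_delta_if_cleared_excess_nonpos:
  assumes "-1 < x1" "-1 < x2" "-1 < x3" and "cleared_excess k1 k2 k3 x1 x2 x3 t \<le> 0"
  shows "triangle_cost k1 k2 k3 x1 x2 x3 t \<le> triangle_delta k1 k2 k3 x1 x2 x3 t"
proof -
  let ?c = "22 * (1 + x1) * (1 + x2) * (1 + x3)"
  have "0 < ?c"
    using assms(1-3) by simp
  moreover have "x1 \<noteq> -1" "x2 \<noteq> -1" "x3 \<noteq> -1"
    using assms(1-3) by auto
  then have "?c * (triangle_cost k1 k2 k3 x1 x2 x3 t - triangle_delta k1 k2 k3 x1 x2 x3 t) \<le> ?c * 0"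
    using assms(4) cleared_excess_eq[of x1 x2 x3 k1 k2 k3 t] by simp
  ultimately show ?thesis
    by (simp only: mult_le_cancel_left_pos)
qed

lemma both_join_commute: "both_join k1 k2 x1 x2 t = both_join k2 k1 x2 x1 t"
  by (cases k1; cases k2) simp_all

lemma pivot_cost_commute: "pivot_cost k1 k2 k3 x1 x2 t = pivot_cost k2 k1 k3 x2 x1 t"
  by (simp add: pivot_cost_def both_join_commute[of k1])

lemma hit_prob_commute: "hit_prob k1 k2 x1 x2 t = hit_prob k2 k1 x2 x1 t"
  by (simp add: hit_prob_def both_join_commute[of k1])

lemma cleared_excess_swap12:
  "cleared_excess k1 k2 k3 x1 x2 x3 t = cleared_excess k2 k1 k3 x2 x1 x3 t"
  unfolding cleared_excess_def triangle_cost_def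
  by (simp add: pivot_cost_commute[of k1 k2] hit_prob_commute[of k1 k2] algebra_simps)

lemma cleared_excess_swap23:
  "cleared_excess k1 k2 k3 x1 x2 x3 t = cleared_excess k1 k3 k2 x1 x3 x2 t"
  unfolding cleared_excess_def triangle_cost_def
  by (simp add: pivot_cost_commute[of k2 k3] hit_prob_commute[of k2 k3] algebra_simps)

definition triangle_feasible :: "real \<Rightarrow> real \<Rightarrow> real \<Rightarrow> real \<Rightarrow> bool" where
  "triangle_feasible x1 x2 x3 t \<longleftrightarrow> 0 \<le> t \<and> t \<le> 1 - x1 \<and> t \<le> 1 - x2 \<and> t \<le> 1 - x3
     \<and> 1 - x1 - x2 \<le> t \<and> 1 - x1 - x3 \<le> t \<and> 1 - x2 - x3 \<le> t"

lemma triangle_feasible_swap12: "triangle_feasible x1 x2 x3 t \<longleftrightarrow> triangle_feasible x2 x1 x3 t"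
  unfolding triangle_feasible_def by linarith

lemma triangle_feasible_swap23: "triangle_feasible x1 x2 x3 t \<longleftrightarrow> triangle_feasible x1 x3 x2 t"
  unfolding triangle_feasible_def by linarith

lemma triangle_feasible_nonneg:
  assumes "triangle_feasible x1 x2 x3 t"
  shows "0 \<le> x1" "0 \<le> x2" "0 \<le> x3" "0 \<le> 1 - x1" "0 \<le> 1 - x2" "0 \<le> 1 - x3"
    "0 \<le> x2 + x3 - x1" "0 \<le> x1 + x3 - x2" "0 \<le> x1 + x2 - x3"
    "0 \<le> t" "0 \<le> 1 - x1 - t" "0 \<le> 1 - x2 - t" "0 \<le> 1 - x3 - t"
    "0 \<le> t + x1 + x2 - 1" "0 \<le> t + x1 + x3 - 1" "0 \<le> t + x2 + x3 - 1"
  using assms unfolding triangle_feasible_def by linarith+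

definition kind_admissible :: "edge_kind \<Rightarrow> real \<Rightarrow> bool" where
  "kind_admissible k x \<longleftrightarrow> (k = Short_plus \<longrightarrow> x \<le> 2/5) \<and> (k = Long_plus \<longrightarrow> 2/5 \<le> x)"

lemma kind_admissible_kind_of: "kind_admissible (kind_of Ep x e) (x e)"
  by (simp add: kind_admissible_def kind_of_def)

section \<open>Positivity certificates\<close>

lemma cleared_excess_minus_minus_minus_nonpos:
  assumes "triangle_feasible x1 x2 x3 t"
  shows "cleared_excess Minus Minus Minus x1 x2 x3 t \<le> 0"
proof -
  note atoms = triangle_feasible_nonneg[OF assms(1)]
  have "0 \<le> 648 * (x1^2 * (1 - x2) * x3 * (1 - x3)) + 100 * (x1 * x2 * (1 - x2) * (1 - x3) * (x1 + x3 - x2))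
    + 156 * ((1 - x1) * x2 * (1 - x2)) + 268 * ((1 - x1) * x2 * (1 - x2) * x3)
    + 144 * ((1 - x1) * (1 - x2) * x3) + 100 * ((1 - x1) * x2^3 * (1 - x3))
    + 12 * ((1 - x1) * x2^2 * (1 - x3)) + 424 * (x1 * (1 - x1) * (1 - x2))
    + 468 * (x1^2 * x2 * (1 - x2) * x3 * (1 - x3)) + 580 * (x1 * (1 - x1) * x2 * (1 - x2))
    + 100 * (x2 * (1 - x2) * (1 - x3) * (x1 + x2 - x3)) + 580 * (x1 * (1 - x1) * x2^2 * (1 - x3))
    + 548 * (x1 * (1 - x1) * x3 * (1 - x3)) + 156 * ((1 - x1) * (1 - x3) * (x2 + x3 - x1))
    + 244 * ((1 - x1) * x2 * x3 * (1 - x3)) + 156 * (x1 * (1 - x2) * (1 - x3) * (x1 + x2 - x3))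
    + 68 * ((1 - x2) * (1 - x3) * (x1 + x2 - x3)) + 112 * (x1 * x2 * (1 - x2) * x3 * (1 - x3))
    + 44 * ((1 - x2) * (1 - x3)) + 24 * ((1 - x1) * x3 * (1 - x3))
    + 32 * (x1 * (1 - x1) * x2 * x3 * (1 - x3)) + 124 * ((1 - x1) * (1 - x2))"
    by (intro add_nonneg_nonneg mult_nonneg_nonneg zero_le_power divide_nonneg_nonneg
        zero_le_numeral zero_le_one atoms)
  also have "\<dots> = - cleared_excess Minus Minus Minus x1 x2 x3 t"
    unfolding cleared_excess_def triangle_cost_def pivot_cost_def hit_prob_def
    by (simp only: both_join.simps join_marginal.simps budget_numerator.simps edge_kind.distinct
        simp_thms if_True if_False) algebra
  finally show ?thesis by simp
qed

lemma cleared_excess_minus_minus_short_nonpos: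
  assumes "triangle_feasible x1 x2 x3 t" and "x3 \<le> 2/5"
  shows "cleared_excess Minus Minus Short_plus x1 x2 x3 t \<le> 0"
proof -
  have "0 \<le> 2/5 - x3"
    using assms(2-) by simp_all
  note atoms = this triangle_feasible_nonneg[OF assms(1)]
  have "0 \<le> 77/5 * ((1 - x2) * (x1 + x2 - x3)) + 11/10 * (x1 * x2 * (1 - x2) * (x1 + x3 - x2))
    + 66/5 * ((1 - x1)^2 * (x1 + x2 - x3)^2) + 55/2 * (x1^2 * (1 - x2) * x3 * (x1 + x3 - x2))
    + 693/40 * (x1 * (1 - x1) * x3 * (x2 + x3 - x1)) + 121/10 * (x1^2 * (1 - x1) * (x1 + x3 - x2))
    + 209/8 * (x1 * (1 - x1) * x3^2 * (x2 + x3 - x1))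
    + 833/40 * (x1 * (1 - x2) * x3 * (x2 + x3 - x1))
    + 11/2 * (x1 * (1 - x1) * x3 * (x2 + x3 - x1)^2) + 4139/20 * (x1 * (1 - x1) * x3^2)
    + 209/10 * (x1 * (1 - x1) * x2) + 66/5 * (x1 * (1 - x1) * (x2 + x3 - x1))
    + 191 * (x1^2 * (1 - x2) * x3^2) + 691/10 * ((1 - x1) * x2) + 112 * (1 - x1)
    + 11/2 * (x1 * x2 * (1 - x2) * x3 * (x2 + x3 - x1))
    + 55/8 * (x1 * x2 * (1 - x2) * x3^2 * (x1 + x3 - x2))
    + 33/2 * (x1 * (1 - x2) * x3^2 * (x1 + x2 - x3)) + 9917/40 * ((1 - x1) * x3^2)
    + 176/5 * (x1 * (1 - x1) * x2 * (x1 + x3 - x2)) + 525/4 * (x1 * x2 * (1 - x2) * x3^2)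
    + 659/8 * (x1 * x2 * (1 - x2) * x3) + 77/8 * (x1^2 * (1 - x1) * x3)
    + 753/4 * (x1 * (1 - x2) * x3^2) + 6067/40 * (x1 * (1 - x1) * x3) + 406/5 * (x1 * (1 - x1))
    + 11/10 * (x2^2 * (1 - x2)) + 11/2 * (x2 * (1 - x2) * x3 * (x1 + x3 - x2))
    + 121/5 * ((1 - x1) * x3 * (x1 + x3 - x2)) + 637/5 * ((1 - x1) * (x1 + x3 - x2))
    + 1549/10 * (x2 * (1 - x2)) + 759/40 * ((1 - x1) * x3^3)
    + 143/8 * ((1 - x2) * x3^2 * (x1 + x2 - x3)) + 55/8 * (x2 * (1 - x2) * x3^2 * (x1 + x2 - x3))
    + 165/8 * (x1^2 * (1 - x2) * x3^2 * (x2 + x3 - x1)) + 143/8 * (x2 * (1 - x2) * x3)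
    + 55/8 * ((1 - x1) * (x1 + x2 - x3)^3 * (2/5 - x3)^2)
    + 55/8 * (x1 * (1 - x2) * x3^3 * (x1 + x2 - x3))
    + 55/8 * (x1 * (1 - x1) * x3^2 * (x2 + x3 - x1) * (x1 + x2 - x3))
    + 55/8 * ((1 - x1) * x3^3 * (x1 + x2 - x3)^2) + 55/8 * ((1 - x2) * x3^3 * (x1 + x3 - x2))
    + 99/8 * ((1 - x1) * x3^3 * (x1 + x2 - x3)) + 101 * (x1^2 * x2 * (1 - x2) * x3^2)
    + 5173/40 * ((1 - x2) * x3 * (x1 + x2 - x3)) + 263/5 * (x1 * (1 - x2) * (x1 + x2 - x3))"
    by (intro add_nonneg_nonneg mult_nonneg_nonneg zero_le_power divide_nonneg_nonneg
        zero_le_numeral zero_le_one atoms)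
  also have "\<dots> = - cleared_excess Minus Minus Short_plus x1 x2 x3 t"
    unfolding cleared_excess_def triangle_cost_def pivot_cost_def hit_prob_def
    by (simp only: both_join.simps join_marginal.simps budget_numerator.simps edge_kind.distinct
        simp_thms if_True if_False) algebra
  finally show ?thesis by simp
qed

lemma cleared_excess_minus_minus_long_nonpos:
  assumes "triangle_feasible x1 x2 x3 t" and "2/5 \<le> x3"
  shows "cleared_excess Minus Minus Long_plus x1 x2 x3 t \<le> 0"
proof -
  have "0 \<le> x3 - 2/5"
    using assms(2-) by simp_all
  note atoms = this triangle_feasible_nonneg[OF assms(1)]
  have "0 \<le> 16 * ((1 - x1) * (1 - x2)) + 1456/5 * ((1 - x1) * x2 * (1 - x2))
    + 90 * (x1 * (1 - x2) * x3 * (x3 - 2/5)) + 68 * (1 - x1) + 36 * ((1 - x1) * x3)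
    + 100 * (x1 * x2 * (1 - x2) * x3^2) + 344 * (x1 * (1 - x1) * x2 * (1 - x3))
    + 1492/5 * (x1 * (1 - x1) * (1 - x2)) + 110 * (x1 * (1 - x2) * (x3 - 2/5)^2)
    + 652/5 * (x1^2 * (1 - x2)^2 * x3) + 200 * ((1 - x1) * x3 * (x3 - 2/5))
    + 44 * (x1 * (1 - x1) * x3^2) + 100 * (x2 * (1 - x2) * x3 * (x3 - 2/5))
    + 1908/5 * (x1^2 * x2 * (1 - x2) * (1 - x3)) + 300 * (x1 * (1 - x1) * (x3 - 2/5))
    + 56 * (x1^2 * (1 - x2) * x3 * (1 - x3)) + 432/5 * (x1 * (1 - x1) * (1 - x2) * x3)
    + 2128/5 * (x1 * (1 - x1) * x2 * (1 - x2)) + 228 * ((1 - x1) * (1 - x2) * x3)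
    + 156 * (x1^2 * x2 * (1 - x2) * x3 * (1 - x3)) + 28 * ((1 - x2)^2 * (1 - x3))
    + 268 * (x2 * (1 - x2) * (x3 - 2/5)) + 56 * (x1 * (1 - x2) * (x2 + x3 - x1) * (x3 - 2/5))"
    by (intro add_nonneg_nonneg mult_nonneg_nonneg zero_le_power divide_nonneg_nonneg
        zero_le_numeral zero_le_one atoms)
  also have "\<dots> = - cleared_excess Minus Minus Long_plus x1 x2 x3 t"
    unfolding cleared_excess_def triangle_cost_def pivot_cost_def hit_prob_def
    by (simp only: both_join.simps join_marginal.simps budget_numerator.simps edge_kind.distinct
        simp_thms if_True if_False) algebra
  finally show ?thesis by simp
qed

lemma cleared_excess_minus_short_short_nonpos:
  assumes "triangle_feasible x1 x2 x3 t" and "x2 \<le> 2/5" and "x3 \<le> 2/5"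
  shows "cleared_excess Minus Short_plus Short_plus x1 x2 x3 t \<le> 0"
proof -
  have "0 \<le> 2/5 - x2" "0 \<le> 2/5 - x3"
    using assms(2-) by simp_all
  note atoms = this triangle_feasible_nonneg[OF assms(1)]
  have "0 \<le> 464/5 * (x1 * (x2 + x3 - x1)^2) + 11 * (x1 * (x1 + x3 - x2)^2 * (2/5 - x2))
    + 508/5 * (x1^2 * (x2 + x3 - x1)) + 2408/25 * (2/5 - x2) + 761/5 * (x2 * (x2 + x3 - x1))
    + 272/5 * (x1 * (x1 + x3 - x2) * (2/5 - x2)) + 112 * (x1 * x2 * x3 * (x2 + x3 - x1))
    + 272/5 * (x1 * x3 * (x2 + x3 - x1)) + 624/5 * (x1 * (2/5 - x3)) + 11 * (x1 * (x2 + x3 - x1)^3)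
    + 11 * (x1^2 * (x2 + x3 - x1)^2) + 11 * (x1 * (x1 + x2 - x3)^2 * (2/5 - x3))
    + 156 * (x2 * x3 * (x2 + x3 - x1)) + 6776/25 * (x1 * (x2 + x3 - x1))
    + 2032/25 * (x1 * (2/5 - x2)) + 308/5 * (x1^2 * (2/5 - x2)) + 308/5 * (x1^2 * (2/5 - x3))
    + 2184/125 * (1 - x1) + 621/5 * ((x1 + x2 - x3) * (2/5 - x3)) + 159/5 * (x3 * (x2 + x3 - x1))
    + 2604/25 * (x2 + x3 - x1) + 19/5 * ((x1 + x3 - x2) * (2/5 - x2))"
    by (intro add_nonneg_nonneg mult_nonneg_nonneg zero_le_power divide_nonneg_nonneg
        zero_le_numeral zero_le_one atoms)
  also have "\<dots> = - cleared_excess Minus Short_plus Short_plus x1 x2 x3 t"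
    unfolding cleared_excess_def triangle_cost_def pivot_cost_def hit_prob_def
    by (simp only: both_join.simps join_marginal.simps budget_numerator.simps edge_kind.distinct
        simp_thms if_True if_False) algebra
  finally show ?thesis by simp
qed

lemma cleared_excess_minus_short_long_nonpos:
  assumes "triangle_feasible x1 x2 x3 t" and "x2 \<le> 2/5" and "2/5 \<le> x3"
  shows "cleared_excess Minus Short_plus Long_plus x1 x2 x3 t \<le> 0"
proof -
  have "0 \<le> 2/5 - x2" "0 \<le> x3 - 2/5"
    using assms(2-) by simp_all
  note atoms = this triangle_feasible_nonneg[OF assms(1)]
  have "0 \<le> 1523094095294808469/36102668127544902 * (1 - x1)^6
    + 771454184250305120/18051334063772451 * ((1 - x3)^3 * (x2 + x3 - x1) * (x1 + x2 - x3) * (x3 - 2/5))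
    + 2620526231125050099/96273781673453072 * ((1 - x1)^2 * (x1 + x3 - x2)^3 * (x1 + x2 - x3))
    + 42284685022808126689/385095126693812288 * ((1 - x2)^2 * (x2 + x3 - x1)^2 * (x1 + x3 - x2)^2)
    + 3024889410354814505/18051334063772451 * ((1 - x3)^3 * (x2 + x3 - x1)^2 * (x3 - 2/5))
    + 4313621771172785881/577642690040718432 * ((1 - x1) * (x1 + x3 - x2)^4 * (x1 + x2 - x3))
    + 1363190707260132107243/8664640350610776480 * ((1 - x1) * (x2 + x3 - x1)^3 * (x1 + x3 - x2) * (x1 + x2 - x3))
    + 5497578495742596899/72205336255089804 * ((1 - x2)^3 * (x2 + x3 - x1) * (x1 + x2 - x3))
    + 9959543066827111609/180513340637724510 * ((1 - x1)^5 * (x1 + x3 - x2))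
    + 1172571791561877547/12034222709181634 * (x2 + x3 - x1)
    + 10171274970698806841/192547563346906144 * ((x1 + x3 - x2)^3 * (x1 + x2 - x3)^2 * (2/5 - x2))
    + 908846957119761487/1925475633469061440 * (x1 + x3 - x2)^6
    + 903413958677713456153/17329280701221552960 * ((x2 + x3 - x1)^5 * (x1 + x2 - x3))
    + 17342401147256861123/385095126693812288 * ((1 - x1)^2 * (x2 + x3 - x1)^2 * (x1 + x3 - x2)^2)
    + 161769457812733817/48136890836726536 * ((1 - x1)^4 * (x2 + x3 - x1) * (x1 + x3 - x2))
    + 137244117149118563461/577642690040718432 * ((1 - x1) * (x2 + x3 - x1)^3 * (x1 + x2 - x3)^2)
    + 2038280888760770029/24068445418363268 * ((1 - x1) * (x1 + x2 - x3))
    + 1373167193079551137/385095126693812288 * ((x1 + x3 - x2)^5 * (2/5 - x2))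
    + 512723991363497051/14811351026685088 * ((x2 + x3 - x1)^2 * (x1 + x3 - x2)^2 * (x1 + x2 - x3)^2)
    + 22840331475008224485/385095126693812288 * ((x2 + x3 - x1)^2 * (x1 + x3 - x2) * (x1 + x2 - x3)^3)
    + 2798197631800060361/288821345020359216 * ((x1 + x3 - x2)^2 * (x1 + x2 - x3)^3 * (x3 - 2/5))
    + 1593102198448128977/144410672510179608 * ((x1 + x3 - x2)^3 * (x1 + x2 - x3)^2 * (x3 - 2/5))
    + 4901618557062737261/120342227091816340 * ((1 - x2)^5 * (x1 + x2 - x3))
    + 1697602157287999333/48136890836726536 * ((1 - x1)^2 * (x1 + x3 - x2)^2 * (x1 + x2 - x3)^2)
    + 9793913260985489725/192547563346906144 * ((x2 + x3 - x1) * (x1 + x3 - x2)^3 * (2/5 - x2))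
    + 61283366345887515391/4621141520325747456 * ((x2 + x3 - x1)^4 * (x1 + x3 - x2)^2)
    + 3165451033105744131/385095126693812288 * ((1 - x1) * (x1 + x2 - x3)^5)
    + 296166982905733619597/11552853800814368640 * ((x2 + x3 - x1)^5 * (x1 + x3 - x2))
    + 4958915937351745/36102668127544902 * ((x1 + x3 - x2) * (x1 + x2 - x3)^4 * (2/5 - x2))
    + 38795316520714722743/1155285380081436864 * ((1 - x2) * (x2 + x3 - x1) * (x1 + x3 - x2)^3 * (x1 + x2 - x3))
    + 2666742897458050417/48136890836726536 * ((1 - x2)^4 * (x2 + x3 - x1)^2)
    + 228517285105592657971/2888213450203592160 * ((1 - x1) * (1 - x2) * (x2 + x3 - x1)^4)
    + 3005243318127183863/48136890836726536 * ((1 - x1)^2 * (x2 + x3 - x1) * (x1 + x2 - x3)^3)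
    + 7695650430690260021/36102668127544902 * ((1 - x1)^3 * (x2 + x3 - x1)^2 * (x1 + x2 - x3))
    + 1547712512860866881/144410672510179608 * ((1 - x3)^4 * (x1 + x3 - x2) * (x1 + x2 - x3))
    + 27335702660378714135/1155285380081436864 * ((x2 + x3 - x1) * (x1 + x2 - x3)^5)
    + 8348464287867109505/96273781673453072 * ((x2 + x3 - x1) * (x1 + x3 - x2)^2 * (x1 + x2 - x3)^2 * (2/5 - x2))
    + 2768212905177072517/36102668127544902 * ((1 - x2)^3 * (x2 + x3 - x1)^2 * (x1 + x2 - x3))
    + 5661062917993061485/144410672510179608 * ((x1 + x3 - x2)^4 * (x1 + x2 - x3) * (2/5 - x2))
    + 1295116670795658419387/11552853800814368640 * ((x2 + x3 - x1)^3 * (x1 + x3 - x2) * (x1 + x2 - x3)^2)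
    + 10758092227418369227/5776426900407184320 * ((x2 + x3 - x1) * (x1 + x3 - x2)^4)
    + 504090964405281334069/3465856140244310592 * ((x2 + x3 - x1)^4 * (x1 + x2 - x3) * (2/5 - x2))
    + 21233628073211777705/1540380506775249152 * ((x2 + x3 - x1) * (x1 + x3 - x2)^4 * (x1 + x2 - x3))
    + 9123619762803168643/24068445418363268 * ((1 - x3)^2 * (x2 + x3 - x1)^3 * (x1 + x3 - x2))
    + 14481757818327313/18051334063772451 * ((1 - x1)^2 * (x1 + x3 - x2)^4)
    + 935671186747773557/18051334063772451 * ((1 - x1)^4 * (x2 + x3 - x1)^2)
    + 376353527979179951/12034222709181634 * ((1 - x1)^3 * (1 - x2) * (x1 + x2 - x3)^2)
    + 2252787458357452849/96273781673453072 * ((1 - x1)^2 * (x2 + x3 - x1) * (x1 + x3 - x2) * (x1 + x2 - x3)^2)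
    + 153992189131373951/6017111354590817 * ((1 - x1)^3 * (1 - x3) * (x1 + x3 - x2)^2)
    + 21747717820639881883/2310570760162873728 * ((x2 + x3 - x1) * (x1 + x3 - x2)^4 * (2/5 - x2))
    + 1320378352766496943/90256670318862255 * ((1 - x2)^5 * (x1 + x3 - x2))
    + 1373434233715481935/36102668127544902 * ((1 - x2)^2 * (x1 + x3 - x2) * (x1 + x2 - x3)^2 * (2/5 - x2))
    + 92115803838768057547/4332320175305388240 * ((1 - x1) * (x2 + x3 - x1)^4 * (x1 + x2 - x3))
    + 5365347497647106681/36102668127544902 * ((x1 + x3 - x2) * (2/5 - x2))
    + 7306371790971190547/48136890836726536 * ((x2 + x3 - x1) * (x1 + x2 - x3))
    + 339421283902756267/18051334063772451 * ((1 - x3)^4 * (x1 + x3 - x2)^2)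
    + 6957516168663479833/180513340637724510 * ((1 - x3)^5 * (x1 + x3 - x2))
    + 2536235494815925081043/17329280701221552960 * ((x2 + x3 - x1)^3 * (x1 + x3 - x2)^2 * (x1 + x2 - x3))
    + 2805357770226221943/96273781673453072 * ((x2 + x3 - x1)^3 * (x1 + x2 - x3)^3)
    + 1850940399702113375/144410672510179608 * ((1 - x3)^4 * (x1 + x2 - x3)^2)
    + 32433210855132029/12034222709181634 * ((1 - x2)^2 * (x2 + x3 - x1) * (x1 + x3 - x2)^2 * (x1 + x2 - x3))
    + 5997665753225101147/577642690040718432 * ((1 - x1)^2 * (x1 + x3 - x2) * (x1 + x2 - x3)^3)
    + 10669488647708911697/144410672510179608 * ((1 - x3) * (x2 + x3 - x1)^2 * (x1 + x2 - x3)^3)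
    + 75796317528233909871/385095126693812288 * ((1 - x3) * (x2 + x3 - x1)^4 * (x1 + x3 - x2))
    + 3924349765155554645/72205336255089804 * ((x1 + x2 - x3)^2 * (2/5 - x2))
    + 30223036078427355331/144410672510179608 * ((x2 + x3 - x1) * (x1 + x3 - x2))
    + 5656745303879153519/192547563346906144 * ((x1 + x3 - x2)^2 * (x1 + x2 - x3)^3 * (2/5 - x2))
    + 80545711802845582255/1155285380081436864 * ((x2 + x3 - x1) * (x1 + x2 - x3)^4 * (2/5 - x2))
    + 7902435527431524673/72205336255089804 * ((1 - x1) * (x2 + x3 - x1)^3 * (x1 + x3 - x2)^2)
    + 563406928675163329777/3465856140244310592 * ((x2 + x3 - x1)^3 * (x1 + x3 - x2) * (x1 + x2 - x3) * (2/5 - x2))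
    + 14571168233509814689/2310570760162873728 * (x2 + x3 - x1)^6
    + 161330998999482902567/1155285380081436864 * ((1 - x2) * (x2 + x3 - x1)^3 * (x1 + x3 - x2)^2)
    + 1023138017189750363/577642690040718432 * (x1 + x2 - x3)^6
    + 8050352825128726739/2888213450203592160 * ((1 - x1) * (x1 + x3 - x2)^5)
    + 1057388418300813211/30085556772954085 * ((1 - x1)^5 * (x1 + x2 - x3))
    + 24179337297149002955/385095126693812288 * ((x2 + x3 - x1) * (x1 + x3 - x2) * (x1 + x2 - x3)^3 * (2/5 - x2))
    + 617518387250255233/18051334063772451 * ((1 - x1) * (x1 + x3 - x2))
    + 498655319847706043/36102668127544902 * (1 - x3)^6
    + 30448384365931348599/96273781673453072 * ((1 - x2)^2 * (x2 + x3 - x1)^2 * (x1 + x3 - x2) * (x1 + x2 - x3))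
    + 13850034847149040517/2310570760162873728 * ((x2 + x3 - x1) * (x1 + x3 - x2)^3 * (x1 + x2 - x3)^2)
    + 1614389312557619041/192547563346906144 * ((1 - x1)^2 * (x1 + x2 - x3)^4)
    + 1129063037106844057/577642690040718432 * ((1 - x3) * (x2 + x3 - x1)^4 * (2/5 - x2))
    + 2649109452039864329/577642690040718432 * ((1 - x3)^2 * (x1 + x3 - x2) * (x1 + x2 - x3)^3)
    + 28758119236317886951/96273781673453072 * ((1 - x2)^2 * (x2 + x3 - x1)^2 * (x1 + x2 - x3)^2)"
    by (intro add_nonneg_nonneg mult_nonneg_nonneg zero_le_power divide_nonneg_nonneg
        zero_le_numeral zero_le_one atoms)
  also have "\<dots> = - cleared_excess Minus Short_plus Long_plus x1 x2 x3 t"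
    unfolding cleared_excess_def triangle_cost_def pivot_cost_def hit_prob_def
    by (simp only: both_join.simps join_marginal.simps budget_numerator.simps edge_kind.distinct
        simp_thms if_True if_False) algebra
  finally show ?thesis by simp
qed

lemma cleared_excess_minus_long_long_nonpos:
  assumes "triangle_feasible x1 x2 x3 t" and "2/5 \<le> x2" and "2/5 \<le> x3"
  shows "cleared_excess Minus Long_plus Long_plus x1 x2 x3 t \<le> 0"
proof -
  have "0 \<le> x2 - 2/5" "0 \<le> x3 - 2/5"
    using assms(2-) by simp_all
  note atoms = this triangle_feasible_nonneg[OF assms(1)]
  have "0 \<le> 8 * ((1 - x1)^2 * (1 - x2) * (1 - x3)^2 * (x2 + x3 - x1))
    + 69005/1728 * ((1 - x3) * (x1 + x2 - x3)^3 * (x2 - 2/5))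
    + 21887/768 * ((1 - x1) * (x2 + x3 - x1)^2 * (x1 + x2 - x3)^2)
    + 44813/3456 * ((1 - x3) * (x1 + x3 - x2) * (x1 + x2 - x3)^3 * (x2 - 2/5))
    + 22579/6912 * ((1 - x1) * (x2 + x3 - x1)^2 * (x1 + x2 - x3)^3)
    + 9575/13824 * ((1 - x2) * (x2 + x3 - x1) * (x1 + x3 - x2) * (x1 + x2 - x3)^3)
    + 87689/1728 * ((1 - x2) * (x2 + x3 - x1) * (x1 + x3 - x2)^2)
    + 19969/216 * ((1 - x3) * (x1 + x3 - x2) * (x1 + x2 - x3)^2 * (x2 - 2/5))
    + 18157/720 * ((1 - x1) * (x1 + x3 - x2)^2 * (x1 + x2 - x3)^2)
    + 130853/10368 * ((1 - x2) * (x1 + x3 - x2)^2 * (x1 + x2 - x3)^2 * (x3 - 2/5))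
    + 20/3 * ((1 - x1) * (1 - x2)^3 * (1 - x3) * (x2 + x3 - x1))
    + 64/3 * ((1 - x1) * (1 - x2) * (1 - x3)) + 9/4 * ((1 - x1)^2 * (x2 + x3 - x1)^4)
    + 198001/13824 * ((1 - x1) * (x2 + x3 - x1)^3 * (x1 + x3 - x2) * (x1 + x2 - x3))
    + 388333/6912 * ((1 - x3) * (x2 + x3 - x1)^2 * (x1 + x2 - x3)^2)
    + 1367129/34560 * ((1 - x1) * (x2 + x3 - x1) * (x1 + x3 - x2)^2 * (x1 + x2 - x3))
    + 455/64 * ((1 - x2) * (x2 + x3 - x1)^3 * (x1 + x2 - x3)^2)
    + 11215/864 * ((1 - x3) * (x1 + x2 - x3)^2 * (x2 - 2/5))
    + 77/4 * ((1 - x2) * (x2 + x3 - x1)^3 * (x1 + x3 - x2))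
    + 110413/1152 * ((1 - x2) * (x2 + x3 - x1) * (x1 + x3 - x2) * (x1 + x2 - x3))
    + 239/24 * ((1 - x2) * (x2 + x3 - x1)^3 * (x1 + x3 - x2)^2)
    + 14411/432 * ((1 - x1) * (x1 + x2 - x3)^2)
    + 71275/1728 * ((1 - x3) * (x2 + x3 - x1) * (x1 + x2 - x3)^2)
    + 964657/6912 * ((1 - x3) * (x2 + x3 - x1)^2 * (x1 + x3 - x2) * (x1 + x2 - x3))
    + 15923/1152 * ((1 - x1) * (x2 + x3 - x1) * (x1 + x3 - x2) * (x1 + x2 - x3))
    + 3/4 * ((1 - x1) * (x2 + x3 - x1)^4)
    + 58793/1080 * ((1 - x1) * (x1 + x3 - x2) * (x1 + x2 - x3)^2)
    + 53261/1728 * ((1 - x2) * (x2 + x3 - x1)^2 * (x1 + x3 - x2)^2)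
    + 239/12 * ((1 - x2) * (x2 + x3 - x1)^3 * (x1 + x3 - x2) * (x1 + x2 - x3))
    + 77/4 * ((1 - x2) * (x2 + x3 - x1)^3 * (x1 + x2 - x3))
    + 19601/6912 * ((1 - x1) * (x1 + x3 - x2)^3 * (x1 + x2 - x3)^2)
    + 19601/6912 * ((1 - x1) * (x2 + x3 - x1)^2 * (x1 + x3 - x2)^3)
    + 91/4 * ((1 - x2) * (x2 + x3 - x1)^2 * (x1 + x3 - x2))
    + 57631/1080 * ((1 - x1) * (x1 + x3 - x2)^2 * (x1 + x2 - x3))
    + 732133/8640 * ((1 - x1) * (x2 + x3 - x1) * (x1 + x3 - x2) * (x1 + x2 - x3)^2)
    + 19601/3456 * ((1 - x1) * (x2 + x3 - x1) * (x1 + x3 - x2)^3 * (x1 + x2 - x3))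
    + 44335/6912 * ((1 - x2) * (x2 + x3 - x1) * (x1 + x3 - x2)^4)
    + 146959/10368 * ((1 - x3) * (x1 + x3 - x2)^2 * (x1 + x2 - x3)^2 * (x2 - 2/5))
    + 19343/216 * ((1 - x2) * (x1 + x3 - x2)^2 * (x1 + x2 - x3) * (x3 - 2/5))
    + 12745/432 * ((1 - x1) * (x1 + x3 - x2)^2)
    + 53945/1728 * ((1 - x1) * (x2 + x3 - x1)^2 * (x1 + x3 - x2)^2 * (x1 + x2 - x3))
    + 4039/96 * ((1 - x3) * (x2 + x3 - x1)^2 * (x1 + x3 - x2)^2)
    + 5/3 * ((1 - x1) * (1 - x2) * (x2 + x3 - x1)^3 * (x2 - 2/5))
    + 62317/13824 * ((1 - x1) * (x2 + x3 - x1)^3 * (x1 + x2 - x3)^2)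
    + 53/3 * ((1 - x1) * (1 - x2)^2) + 88 * ((1 - x1) * (x1 + x3 - x2))
    + 92 * ((1 - x1) * (x1 + x2 - x3))
    + 46693/3456 * ((1 - x2) * (x2 + x3 - x1)^2 * (x1 + x3 - x2)^3)
    + 88613/6912 * ((1 - x2) * (x2 + x3 - x1)^2 * (x1 + x3 - x2) * (x1 + x2 - x3)^2)
    + 87553/3456 * ((1 - x2) * (x2 + x3 - x1)^2 * (x1 + x3 - x2)^2 * (x1 + x2 - x3))
    + 3/2 * (1 - x2)^4 + 17243/3456 * ((1 - x1) * (x2 + x3 - x1)^3 * (x1 + x3 - x2)^2)
    + 89929/3456 * ((1 - x3) * (x2 + x3 - x1) * (x1 + x3 - x2) * (x1 + x2 - x3)^3)
    + 90539/13824 * ((1 - x3) * (x2 + x3 - x1)^2 * (x1 + x2 - x3)^3)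
    + 25925/13824 * ((1 - x2) * (x2 + x3 - x1) * (x1 + x3 - x2)^3 * (x1 + x2 - x3))
    + 41933/6912 * ((1 - x3) * (x2 + x3 - x1) * (x1 + x2 - x3)^4)
    + 62731/1728 * ((1 - x1) * (x1 + x3 - x2)^3) + 59825/1728 * ((1 - x1) * (x1 + x2 - x3)^3)
    + 77/24 * ((1 - x2) * (x1 + x3 - x2)^4) + 7/6 * (1 - x3)^4
    + 82255/3456 * ((1 - x3) * (x2 + x3 - x1) * (x1 + x3 - x2)^2 * (x1 + x2 - x3)^2)
    + 80741/6912 * (x1 * (1 - x1) * (x2 + x3 - x1) * (x1 + x3 - x2) * (x1 + x2 - x3)^2)
    + 43/3 * ((1 - x1) * (1 - x3)^2) + 22579/6912 * ((1 - x1) * (x1 + x3 - x2)^2 * (x1 + x2 - x3)^3)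
    + 547/192 * ((1 - x3) * (x2 + x3 - x1)^3 * (x1 + x2 - x3)^2)
    + 47791/3456 * ((1 - x2) * (x1 + x3 - x2)^3 * (x1 + x2 - x3) * (x3 - 2/5))
    + 69/4 * ((1 - x2) * (x2 + x3 - x1)^2 * (x1 + x2 - x3))
    + 2015/13824 * ((1 - x3) * (x2 + x3 - x1)^2 * (x1 + x3 - x2)^2 * (x1 + x2 - x3))
    + 73387/3456 * ((1 - x1) * (x2 + x3 - x1)^2 * (x1 + x3 - x2) * (x1 + x2 - x3))
    + 60895/1728 * ((1 - x2) * (x1 + x3 - x2)^3 * (x3 - 2/5))
    + 725/864 * ((1 - x2) * (x1 + x3 - x2)^2 * (x3 - 2/5))
    + (22 * (1 + x1) * (1 + x2) * (1 + x3) + 78 * (1 + 2 * x1) * (1 - x1) * (1 + x2) * (1 + x3)) * (1 - x1 - t)"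
    by (intro add_nonneg_nonneg mult_nonneg_nonneg zero_le_power divide_nonneg_nonneg
        zero_le_numeral zero_le_one atoms)
  also have "\<dots> = - cleared_excess Minus Long_plus Long_plus x1 x2 x3 t"
    unfolding cleared_excess_def triangle_cost_def pivot_cost_def hit_prob_def
    by (simp only: both_join.simps join_marginal.simps budget_numerator.simps edge_kind.distinct
        simp_thms if_True if_False) algebra
  finally show ?thesis by simp
qed

lemma cleared_excess_short_short_short_nonpos:
  assumes "triangle_feasible x1 x2 x3 t" and "x1 \<le> 2/5" and "x2 \<le> 2/5" and "x3 \<le> 2/5"
  shows "cleared_excess Short_plus Short_plus Short_plus x1 x2 x3 t \<le> 0"
proof -
  have "0 \<le> 2/5 - x1" "0 \<le> 2/5 - x2" "0 \<le> 2/5 - x3"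
    using assms(2-) by simp_all
  note atoms = this triangle_feasible_nonneg[OF assms(1)]
  have "0 \<le> 156 * (x1^2 * x2 * x3) + 156 * (x1^2 * x2) + 39 * (x2 * x3 * (x1 + x3 - x2))
    + 156 * (x1 * x2^2 * x3) + 156 * (x1 * x2^2) + 156 * (x1 * x2 * x3^2) + 312 * (x1 * x2 * x3)
    + 78 * (x2 + x3 - x1)^2 + 117 * (x1 * x3^2) + 156 * (x2 * (x1 + x2 - x3))
    + 156 * (x1 * (x1 + x3 - x2)) + 117 * (x2 * x3^2) + 195 * x3^3
    + 195 * ((x2 + x3 - x1) * (x1 + x3 - x2) * (2/5 - x3)) + 39 * (x1 * x3 * (x2 + x3 - x1))"
    by (intro add_nonneg_nonneg mult_nonneg_nonneg zero_le_power divide_nonneg_nonneg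
        zero_le_numeral zero_le_one atoms)
  also have "\<dots> = - cleared_excess Short_plus Short_plus Short_plus x1 x2 x3 t"
    unfolding cleared_excess_def triangle_cost_def pivot_cost_def hit_prob_def
    by (simp only: both_join.simps join_marginal.simps budget_numerator.simps edge_kind.distinct
        simp_thms if_True if_False) algebra
  finally show ?thesis by simp
qed

lemma cleared_excess_short_short_long_nonpos:
  assumes "triangle_feasible x1 x2 x3 t" and "x1 \<le> 2/5" and "x2 \<le> 2/5" and "2/5 \<le> x3"
  shows "cleared_excess Short_plus Short_plus Long_plus x1 x2 x3 t \<le> 0"
proof -
  have "0 \<le> 2/5 - x1" "0 \<le> 2/5 - x2" "0 \<le> x3 - 2/5"
    using assms(2-) by simp_all
  note atoms = this triangle_feasible_nonneg[OF assms(1)]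
  have "0 \<le> 156 * (x1^2 * x2 * x3) + 7 * (x1^2 * x2) + 417/2 * (x1^2 * x3) + 110 * x1^2
    + 156 * (x1 * x2^2 * x3) + 7 * (x1 * x2^2) + 112 * (x1 * x2 * x3^2)
    + 149 * (x1 * x2 * (x1 + x2 - x3)) + 90 * (x2 * (x1 + x2 - x3)) + 119/2 * (x1 * x3^2)
    + 417/2 * (x2^2 * x3) + 22 * x2^2 + 119/2 * (x2 * x3^2) + 2 * (x1 * (x1 + x3 - x2))
    + 105/2 * ((x2 + x3 - x1) * (x1 + x3 - x2) * (x3 - 2/5)) + 105/2 * (x3^2 * (x1 + x2 - x3))
    + 110 * (x3 * (x3 - 2/5)) + 23 * (x2 + x3 - x1)^2"
    by (intro add_nonneg_nonneg mult_nonneg_nonneg zero_le_power divide_nonneg_nonneg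
        zero_le_numeral zero_le_one atoms)
  also have "\<dots> = - cleared_excess Short_plus Short_plus Long_plus x1 x2 x3 t"
    unfolding cleared_excess_def triangle_cost_def pivot_cost_def hit_prob_def
    by (simp only: both_join.simps join_marginal.simps budget_numerator.simps edge_kind.distinct
        simp_thms if_True if_False) algebra
  finally show ?thesis by simp
qed

lemma cleared_excess_short_long_long_nonpos:
  assumes "triangle_feasible x1 x2 x3 t" and "x1 \<le> 2/5" and "2/5 \<le> x2" and "2/5 \<le> x3"
  shows "cleared_excess Short_plus Long_plus Long_plus x1 x2 x3 t \<le> 0"
proof -
  have "0 \<le> 2/5 - x1" "0 \<le> x2 - 2/5" "0 \<le> x3 - 2/5"
    using assms(2-) by simp_all
  note atoms = this triangle_feasible_nonneg[OF assms(1)]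
  have "0 \<le> 3197/275 * (t * (t + x1 + x2 - 1)^2 * (x2 - 2/5))
    + 312/11 * ((1 - x2 - t)^2 * (2/5 - x1)^2 * (x2 - 2/5))
    + 156/11 * ((t + x1 + x2 - 1) * (2/5 - x1) * (x2 - 2/5)^2 * (x3 - 2/5))
    + 204156/1375 * ((1 - x2 - t) * (2/5 - x1)^2) + 53511/6875 * ((1 - x1 - t) * (t + x1 + x2 - 1))
    + 593127/5500 * (t * (2/5 - x1) * (x3 - 2/5))
    + 15963/275 * ((1 - x1 - t) * (1 - x2 - t) * (t + x2 + x3 - 1)^2)
    + 57539/11000 * (t^2 * (x2 - 2/5)) + 117/11 * (t * (t + x2 + x3 - 1)^2 * (2/5 - x1)^2)
    + 44347/2500 * ((1 - x2 - t) * (t + x1 + x2 - 1))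
    + 156/11 * ((t + x1 + x2 - 1) * (2/5 - x1) * (x2 - 2/5) * (x3 - 2/5)^2)
    + 202121/1500 * ((x2 - 2/5)^2 * (x3 - 2/5))
    + 143/375 * ((1 - x2 - t) * (t + x2 + x3 - 1) * (x2 - 2/5))
    + 54030127/82500 * ((x2 - 2/5) * (x3 - 2/5)) + 587647/33000 * ((1 - x3 - t) * (x3 - 2/5)^2)
    + 37483/1100 * ((t + x1 + x3 - 1) * (t + x2 + x3 - 1) * (2/5 - x1) * (x3 - 2/5))
    + 9668/275 * (t^2 * (1 - x3 - t) * (x3 - 2/5))
    + 6471/275 * ((1 - x1 - t) * (t + x1 + x3 - 1) * (x3 - 2/5)^2)
    + 35341/1100 * ((1 - x2 - t)^2 * (t + x1 + x3 - 1))
    + 5831/220 * ((t + x1 + x2 - 1) * (t + x2 + x3 - 1) * (2/5 - x1) * (x3 - 2/5))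
    + 234/11 * (t^2 * (2/5 - x1) * (x2 - 2/5) * (x3 - 2/5)) + 6711502/34375 * (t + x1 + x2 - 1)
    + 156/11 * ((t + x1 + x3 - 1) * (2/5 - x1) * (x2 - 2/5)^2 * (x3 - 2/5))
    + 3943/125 * (t * (t + x1 + x2 - 1) * (2/5 - x1))
    + 29463/1100 * ((t + x1 + x3 - 1) * (t + x2 + x3 - 1) * (2/5 - x1) * (x2 - 2/5))
    + 78/11 * (t * (1 - x2 - t)^2 * (2/5 - x1) * (x2 - 2/5))
    + 6471/275 * (t * (1 - x2 - t) * (t + x1 + x2 - 1) * (2/5 - x1))
    + 7185593/27500 * ((t + x1 + x2 - 1) * (x2 - 2/5))
    + 173731/16500 * ((1 - x2 - t) * (t + x2 + x3 - 1)^2)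
    + 36999/275 * ((1 - x3 - t) * (2/5 - x1)^2) + 127109/6600 * (t^2 * (x3 - 2/5))
    + 624/55 * (t * (t + x2 + x3 - 1) * (x2 - 2/5) * (x3 - 2/5)) + 27637/3000 * (1 - x2 - t)^3
    + 1433624/6875 * (2/5 - x1)^2 + 3197/275 * ((1 - x1 - t)^2 * (1 - x2 - t) * (t + x2 + x3 - 1))
    + 2353/1100 * (t * (1 - x1 - t) * (t + x2 + x3 - 1) * (2/5 - x1))
    + 6394/275 * ((1 - x1 - t) * (1 - x3 - t) * (t + x2 + x3 - 1)^2)
    + 2920457/27500 * ((t + x1 + x3 - 1) * (x3 - 2/5))
    + 234/11 * ((t + x1 + x3 - 1) * (t + x2 + x3 - 1) * (2/5 - x1) * (x2 - 2/5) * (x3 - 2/5))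
    + 2134553/82500 * (x3 - 2/5)^2
    + 24891/1100 * ((t + x1 + x2 - 1) * (t + x2 + x3 - 1) * (2/5 - x1) * (x2 - 2/5))
    + 74927/500 * (t * (2/5 - x1) * (x2 - 2/5))
    + 3197/275 * ((1 - x2 - t) * (2/5 - x1)^2 * (x3 - 2/5)) + 4748461/41250 * (1 - x3 - t)^2
    + 19201/220 * ((1 - x2 - t) * (t + x1 + x3 - 1))
    + 30469/550 * ((1 - x3 - t) * (2/5 - x1)^2 * (x3 - 2/5))
    + 234/11 * ((t + x1 + x2 - 1) * (t + x2 + x3 - 1) * (2/5 - x1) * (x2 - 2/5) * (x3 - 2/5))
    + 1757219/16500 * ((1 - x3 - t) * (x2 - 2/5))
    + 46371/1100 * (t * (t + x2 + x3 - 1) * (2/5 - x1)^2)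
    + 312/11 * ((1 - x3 - t)^2 * (2/5 - x1)^2 * (x3 - 2/5))
    + 331091/2750 * ((x2 - 2/5) * (x3 - 2/5)^2) + 11449/6600 * ((1 - x3 - t) * (t + x2 + x3 - 1)^2)
    + 6471/275 * ((1 - x1 - t) * (t + x1 + x3 - 1) * (x2 - 2/5) * (x3 - 2/5))
    + 6387/11000 * ((t + x1 + x2 - 1) * (x2 - 2/5)^2)
    + 57539/11000 * ((t + x1 + x3 - 1) * (x2 - 2/5)^2)
    + 3197/275 * (t * (t + x1 + x3 - 1)^2 * (x3 - 2/5))
    + 17681371/82500 * ((1 - x2 - t) * (x3 - 2/5)) + 39600637/825000 * (1 - x2 - t)
    + 117/11 * ((1 - x1 - t) * (t + x1 + x2 - 1) * (t + x2 + x3 - 1)^3)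
    + 117/11 * ((1 - x1 - t) * (1 - x2 - t) * (t + x2 + x3 - 1)^3)
    + 195/11 * ((t + x1 + x3 - 1) * (t + x2 + x3 - 1)^4)
    + 195/11 * ((1 - x3 - t) * (t + x2 + x3 - 1)^4)
    + 78/11 * (t^2 * (t + x2 + x3 - 1)^2 * (2/5 - x1))
    + 78/11 * (t * (1 - x3 - t)^2 * (2/5 - x1) * (x3 - 2/5))
    + 3148/275 * ((1 - x3 - t) * (t + x2 + x3 - 1)^2 * (2/5 - x1))
    + 26759/1100 * ((t + x1 + x2 - 1) * (t + x2 + x3 - 1)^3)
    + 34559/1100 * ((1 - x2 - t) * (t + x2 + x3 - 1)^3)
    + 3197/275 * ((1 - x3 - t) * (2/5 - x1)^2 * (x2 - 2/5)) + 26226361/137500 * (x3 - 2/5)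
    + 156/11 * ((t + x1 + x3 - 1) * (2/5 - x1) * (x2 - 2/5) * (x3 - 2/5)^2)
    + 3208/55 * ((1 - x1 - t) * (t + x1 + x2 - 1) * (t + x2 + x3 - 1)^2)
    + 24683647/825000 * (1 - x3 - t) + 58484/1375 * ((t + x1 + x2 - 1) * (x3 - 2/5)^2)
    + 78/11 * ((1 - x3 - t) * (t + x2 + x3 - 1)^3)
    + 195/11 * ((t + x1 + x3 - 1) * (t + x2 + x3 - 1)^2 * (2/5 - x1) * (x3 - 2/5))
    + 195/11 * ((t + x1 + x2 - 1) * (t + x2 + x3 - 1)^2 * (2/5 - x1) * (x2 - 2/5))
    + 43159/550 * ((1 - x2 - t) * (2/5 - x1)^2 * (x2 - 2/5))"
    by (intro add_nonneg_nonneg mult_nonneg_nonneg zero_le_power divide_nonneg_nonneg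
        zero_le_numeral zero_le_one atoms)
  also have "\<dots> = - cleared_excess Short_plus Long_plus Long_plus x1 x2 x3 t"
    unfolding cleared_excess_def triangle_cost_def pivot_cost_def hit_prob_def
    by (simp only: both_join.simps join_marginal.simps budget_numerator.simps edge_kind.distinct
        simp_thms if_True if_False) algebra
  finally show ?thesis by simp
qed

lemma cleared_excess_long_long_long_nonpos:
  assumes "triangle_feasible x1 x2 x3 t" and "2/5 \<le> x1" and "2/5 \<le> x2" and "2/5 \<le> x3"
  shows "cleared_excess Long_plus Long_plus Long_plus x1 x2 x3 t \<le> 0"
proof -
  have "0 \<le> x1 - 2/5" "0 \<le> x2 - 2/5" "0 \<le> x3 - 2/5"
    using assms(2-) by simp_all
  note atoms = this triangle_feasible_nonneg[OF assms(1)]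
  have "0 \<le> 97076/705 * ((1 - x2 - t) * (t + x1 + x3 - 1)^2 * (x2 - 2/5))
    + 1872/235 * ((1 - x3 - t)^2 * (t + x1 + x2 - 1) * (t + x1 + x3 - 1) * (t + x2 + x3 - 1))
    + 6305894/88125 * (t * (t + x2 + x3 - 1)^2 * (x1 - 2/5))
    + 2916152371/107512500 * ((1 - x1 - t) * (t + x1 + x3 - 1)^2)
    + 1875768109/17918750 * ((1 - x1 - t) * (t + x1 + x2 - 1))
    + 1872/235 * ((1 - x3 - t) * (t + x1 + x2 - 1)^3 * (t + x1 + x3 - 1))
    + 1502934887/10751250 * ((1 - x3 - t) * (x2 - 2/5)^2)
    + 936/235 * ((1 - x1 - t) * (1 - x3 - t) * (x3 - 2/5)^3)
    + 105550998431/537562500 * ((1 - x3 - t) * (x2 - 2/5))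
    + 7488/235 * ((1 - x2 - t)^2 * (t + x1 + x3 - 1)^2 * (x2 - 2/5))
    + 7392479/264375 * (t * (t + x1 + x2 - 1) * (t + x2 + x3 - 1)^2)
    + 416/235 * (t^3 * (t + x1 + x2 - 1) * (t + x1 + x3 - 1))
    + 16848/235 * (t * (t + x2 + x3 - 1) * (x1 - 2/5) * (x2 - 2/5) * (x3 - 2/5))
    + 13933800961/107512500 * (t * (t + x1 + x2 - 1) * (t + x1 + x3 - 1))
    + 6783025013/107512500 * (t * (t + x2 + x3 - 1)^2)
    + 273572275013/1612687500 * ((1 - x1 - t) * (x3 - 2/5))
    + 5181427/105750 * (t^2 * (1 - x3 - t)^2)
    + 28223027251/179187500 * ((1 - x2 - t) * (t + x1 + x3 - 1))
    + 1872/235 * ((1 - x1 - t) * (t + x1 + x2 - 1) * (t + x2 + x3 - 1)^3)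
    + 717480316/26878125 * ((1 - x3 - t) * (t + x2 + x3 - 1)^2)
    + 120016/29375 * (t * (t + x2 + x3 - 1) * (x2 - 2/5) * (x3 - 2/5))
    + 130774/3525 * ((1 - x3 - t) * (t + x1 + x2 - 1)^2 * (t + x1 + x3 - 1))
    + 57899237/528750 * (t * (t + x1 + x2 - 1) * (t + x1 + x3 - 1) * (x2 - 2/5))
    + 36071579/14687500 * (1 - x3 - t)
    + 1872/235 * (t * (t + x1 + x3 - 1)^2 * (t + x2 + x3 - 1) * (x2 - 2/5))
    + 936/235 * ((1 - x1 - t) * (1 - x2 - t) * (x1 - 2/5)^3)
    + 113926/3525 * ((1 - x2 - t) * (t + x1 + x2 - 1) * (t + x1 + x3 - 1)^2)
    + 1144/235 * ((1 - x2 - t) * (1 - x3 - t)^3 * (x2 - 2/5))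
    + 61985416/5375625 * ((1 - x3 - t) * (t + x1 + x2 - 1) * (t + x2 + x3 - 1))
    + 4713427/105750 * (t * (t + x1 + x3 - 1)^2 * (x2 - 2/5))
    + 7488/235 * ((1 - x1 - t)^2 * (t + x2 + x3 - 1)^2 * (x1 - 2/5))
    + 622532072/3225375 * ((1 - x3 - t) * (x1 - 2/5))
    + 1456/235 * ((1 - x1 - t) * (1 - x3 - t)^3 * (x1 - 2/5))
    + 15912/235 * (t * (t + x1 + x2 - 1) * (t + x1 + x3 - 1) * (x2 - 2/5) * (x3 - 2/5))
    + 6165028049/26878125 * ((1 - x2 - t) * (t + x1 + x3 - 1)^2)
    + 2340/47 * (t * (t + x1 + x2 - 1) * (x1 - 2/5) * (x2 - 2/5) * (x3 - 2/5))
    + 1977777/58750 * (t * (t + x1 + x2 - 1)^2 * (x1 - 2/5))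
    + 936/235 * ((1 - x2 - t) * (1 - x3 - t) * (x2 - 2/5)^3)
    + 3023504191/17918750 * ((1 - x3 - t) * (t + x1 + x2 - 1)^2)
    + 869986777/4300500 * ((1 - x1 - t) * (t + x2 + x3 - 1)^2)
    + 1144/235 * ((1 - x1 - t)^3 * (1 - x3 - t) * (x3 - 2/5))
    + 221255858/1791875 * ((1 - x3 - t) * (t + x2 + x3 - 1))
    + 123286/3525 * ((1 - x2 - t) * (t + x1 + x3 - 1)^2 * (t + x2 + x3 - 1))
    + 2340/47 * (t * (t + x1 + x3 - 1) * (x1 - 2/5) * (x2 - 2/5) * (x3 - 2/5))
    + 97076/705 * ((1 - x3 - t) * (t + x1 + x2 - 1)^2 * (x3 - 2/5))
    + 4987463689/26878125 * ((1 - x2 - t) * (x3 - 2/5)^2)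
    + 106438/3525 * ((1 - x1 - t) * (t + x1 + x3 - 1) * (t + x2 + x3 - 1)^2)
    + 1872/235 * ((1 - x2 - t)^2 * (t + x1 + x2 - 1) * (t + x1 + x3 - 1) * (t + x2 + x3 - 1))
    + 1872/235 * (t * (t + x1 + x2 - 1)^2 * (t + x1 + x3 - 1) * (x3 - 2/5))
    + 2808/235 * ((1 - x3 - t) * (t + x1 + x2 - 1)^3 * (t + x2 + x3 - 1))
    + 10966/3525 * ((1 - x3 - t)^2 * (t + x1 + x2 - 1) * (x3 - 2/5))
    + 2271470629/107512500 * ((1 - x1 - t) * (t + x1 + x2 - 1)^2)
    + 18454/3525 * ((1 - x1 - t)^2 * (t + x2 + x3 - 1) * (x1 - 2/5))
    + 1872/235 * (t * (t + x1 + x2 - 1) * (t + x1 + x3 - 1)^2 * (x2 - 2/5))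
    + 3132569/176250 * (t * (t + x1 + x2 - 1) * (t + x1 + x3 - 1)^2)
    + 5824/235 * ((1 - x2 - t) * (t + x1 + x3 - 1)^3 * (x2 - 2/5))
    + 1872/235 * (t * (t + x1 + x2 - 1) * (t + x2 + x3 - 1)^2 * (x1 - 2/5))
    + 936/235 * ((1 - x1 - t)^2 * (1 - x2 - t) * (1 - x3 - t) * (t + x2 + x3 - 1))
    + 478828/3525 * ((1 - x1 - t) * (t + x2 + x3 - 1)^2 * (x1 - 2/5))
    + 9755233/88125 * (t * (t + x1 + x2 - 1) * (t + x2 + x3 - 1) * (x1 - 2/5))
    + 1872/235 * (t * (t + x1 + x3 - 1) * (t + x2 + x3 - 1)^2 * (x1 - 2/5))
    + 2240915903/10751250 * ((1 - x3 - t) * (x1 - 2/5)^2)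
    + 2731974953/107512500 * (t^2 * (1 - x3 - t))
    + 6136/235 * ((1 - x1 - t) * (t + x2 + x3 - 1)^3 * (x1 - 2/5))
    + 5824/235 * ((1 - x3 - t) * (t + x1 + x2 - 1)^3 * (x3 - 2/5))
    + 2808/235 * ((1 - x2 - t) * (t + x1 + x2 - 1) * (t + x1 + x3 - 1)^3)
    + 123286/3525 * ((1 - x1 - t) * (t + x1 + x2 - 1) * (t + x2 + x3 - 1)^2)
    + 1613096773/53756250 * ((1 - x1 - t) * (t + x1 + x2 - 1) * (t + x2 + x3 - 1))
    + 15383873/528750 * (t * (t + x1 + x3 - 1) * (t + x2 + x3 - 1)^2)
    + 10576313/58750 * (t * (t + x1 + x3 - 1) * (t + x2 + x3 - 1) * (x1 - 2/5))
    + 2379518/17625 * ((1 - x2 - t) * (t + x1 + x2 - 1) * (t + x1 + x3 - 1))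
    + 41184/29375 * (t^3 * (x3 - 2/5)) + 5148/235 * (t * (x1 - 2/5)^2 * (x2 - 2/5) * (x3 - 2/5))
    + 13217577/58750 * (t * (t + x1 + x2 - 1)^2 * (x3 - 2/5))
    + 1456/235 * ((1 - x1 - t) * (1 - x2 - t)^3 * (x1 - 2/5))
    + 1872/235 * ((1 - x2 - t) * (t + x1 + x3 - 1)^3 * (t + x2 + x3 - 1))
    + 1872/235 * ((1 - x1 - t)^2 * (t + x1 + x2 - 1) * (t + x1 + x3 - 1) * (t + x2 + x3 - 1))
    + 1144/235 * ((1 - x1 - t)^3 * (1 - x2 - t) * (x2 - 2/5))
    + 1872/235 * (t * (t + x1 + x2 - 1)^2 * (t + x2 + x3 - 1)^2)
    + 728/235 * (t^3 * (t + x1 + x2 - 1) * (t + x2 + x3 - 1))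
    + 1538166/29375 * (t * (t + x1 + x2 - 1) * (t + x1 + x3 - 1) * (t + x2 + x3 - 1))
    + 266159969/53756250 * (t^2 * (1 - x2 - t))
    + 106438/3525 * ((1 - x3 - t) * (t + x1 + x2 - 1)^2 * (t + x2 + x3 - 1))
    + 2808/235 * ((1 - x1 - t) * (t + x1 + x3 - 1) * (t + x2 + x3 - 1)^3)
    + 7488/235 * ((1 - x3 - t)^2 * (t + x1 + x2 - 1)^2 * (x3 - 2/5))
    + 1872/235 * ((1 - x3 - t)^3 * (x3 - 2/5))
    + 1872/235 * (t * (t + x1 + x3 - 1)^2 * (t + x2 + x3 - 1)^2)
    + 1872/235 * ((1 - x2 - t)^3 * (x2 - 2/5))
    + 1872/235 * (t * (t + x1 + x2 - 1)^2 * (t + x2 + x3 - 1) * (x3 - 2/5))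
    + 14976/235 * (t * (t + x1 + x2 - 1) * (t + x2 + x3 - 1) * (x1 - 2/5) * (x3 - 2/5))
    + 8249539/528750 * (t^2 * (1 - x2 - t)^2)
    + 9834569/176250 * (t * (t + x1 + x3 - 1) * (x2 - 2/5) * (x3 - 2/5))
    + 14976/235 * (t * (t + x1 + x3 - 1) * (t + x2 + x3 - 1) * (x1 - 2/5) * (x2 - 2/5))
    + 1287947/28125 * (t * (t + x1 + x2 - 1) * (t + x2 + x3 - 1))
    + 1872/235 * (t * (t + x1 + x2 - 1)^2 * (t + x1 + x3 - 1)^2)
    + 24643030819/1612687500 * ((1 - x1 - t) * (x2 - 2/5))
    + 522329434/26878125 * ((1 - x3 - t) * (t + x1 + x3 - 1)^2)
    + 5450562853/26878125 * ((1 - x1 - t) * (x3 - 2/5)^2)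
    + 12829582/146875 * (t * (t + x1 + x3 - 1) * (x1 - 2/5))
    + 1144/235 * ((1 - x2 - t)^3 * (1 - x3 - t) * (x3 - 2/5))
    + 10690627/528750 * (t * (t + x1 + x3 - 1) * (x3 - 2/5)^2)
    + 4817027/35250 * (t * (t + x1 + x3 - 1) * (t + x2 + x3 - 1) * (x2 - 2/5))
    + 162598/3525 * ((1 - x2 - t) * (t + x1 + x2 - 1)^2)
    + 10966/3525 * ((1 - x2 - t)^2 * (t + x1 + x3 - 1) * (x2 - 2/5))
    + 205595423531/1612687500 * ((1 - x2 - t) * (x1 - 2/5))
    + 191263/17625 * (t * (t + x2 + x3 - 1) * (x1 - 2/5)^2)
    + 56894983/264375 * (t * (t + x1 + x2 - 1) * (x3 - 2/5)^2)
    + 25901860389/179187500 * ((1 - x1 - t) * (t + x2 + x3 - 1))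
    + 24654408469/107512500 * (t * (t + x1 + x2 - 1)^2)
    + 5644771/264375 * (t * (t + x1 + x2 - 1)^2 * (x2 - 2/5))
    + 1872/235 * ((1 - x1 - t)^3 * (x1 - 2/5))
    + 126405229331/322537500 * (t * (t + x1 + x3 - 1) * (t + x2 + x3 - 1))
    + 728/235 * (t^3 * (t + x1 + x3 - 1) * (t + x2 + x3 - 1))"
    by (intro add_nonneg_nonneg mult_nonneg_nonneg zero_le_power divide_nonneg_nonneg
        zero_le_numeral zero_le_one atoms)
  also have "\<dots> = - cleared_excess Long_plus Long_plus Long_plus x1 x2 x3 t"
    unfolding cleared_excess_def triangle_cost_def pivot_cost_def hit_prob_def
    by (simp only: both_join.simps join_marginal.simps budget_numerator.simps edge_kind.distinct
        simp_thms if_True if_False) algebra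
  finally show ?thesis by simp
qed

section \<open>Reduction to sorted kinds\<close>

lemma sorted_wlog3:
  fixes f :: "'a \<Rightarrow> 'b::linorder"
  assumes "\<And>a b c. P a b c \<Longrightarrow> P b a c" and "\<And>a b c. P a b c \<Longrightarrow> P a c b"
    and "\<And>a b c. f a \<le> f b \<Longrightarrow> f b \<le> f c \<Longrightarrow> P a b c"
  shows "P a b c"
  by (rule le_cases3[of "f a" "f b" "f c"]) (use assms in blast)+

fun kind_rank :: "edge_kind \<Rightarrow> nat" where
  "kind_rank Minus = 0"
| "kind_rank Short_plus = 1"
| "kind_rank Long_plus = 2"

lemma cleared_excess_sorted_nonpos:
  assumes "kind_rank k1 \<le> kind_rank k2" "kind_rank k2 \<le> kind_rank k3"
    and "kind_admissible k1 x1" "kind_admissible k2 x2" "kind_admissible k3 x3"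
    and "triangle_feasible x1 x2 x3 t"
  shows "cleared_excess k1 k2 k3 x1 x2 x3 t \<le> 0"
  using assms
  by (cases k1; cases k2; cases k3)
    (simp_all add: kind_admissible_def cleared_excess_minus_minus_minus_nonpos
      cleared_excess_minus_minus_short_nonpos cleared_excess_minus_minus_long_nonpos
      cleared_excess_minus_short_short_nonpos cleared_excess_minus_short_long_nonpos
      cleared_excess_minus_long_long_nonpos cleared_excess_short_short_short_nonpos
      cleared_excess_short_short_long_nonpos cleared_excess_short_long_long_nonpos
      cleared_excess_long_long_long_nonpos)

lemma cleared_excess_nonpos:
  assumes "kind_admissible k1 x1" "kind_admissible k2 x2" "kind_admissible k3 x3"
    and "triangle_feasible x1 x2 x3 t"
  shows "cleared_excess k1 k2 k3 x1 x2 x3 t \<le> 0"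
proof -
  define P where "P a b c \<longleftrightarrow>
      kind_admissible (fst a) (snd a) \<and> kind_admissible (fst b) (snd b) \<and> kind_admissible (fst c) (snd c)
      \<and> triangle_feasible (snd a) (snd b) (snd c) t
      \<longrightarrow> cleared_excess (fst a) (fst b) (fst c) (snd a) (snd b) (snd c) t \<le> 0" for a b c
  have "P a b c" for a b c
  proof (rule sorted_wlog3[where f = "kind_rank \<circ> fst"])
    show "P b a c" if "P a b c" for a b c
      using that unfolding P_def by (metis cleared_excess_swap12 triangle_feasible_swap12)
    show "P a c b" if "P a b c" for a b c
      using that unfolding P_def by (metis cleared_excess_swap23 triangle_feasible_swap23)
    show "P a b c" if "(kind_rank \<circ> fst) a \<le> (kind_rank \<circ> fst) b" "(kind_rank \<circ> fst) b \<le> (kind_rank \<circ> fst) c"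
      for a b c
      using that cleared_excess_sorted_nonpos unfolding P_def by simp
  qed
  from this[of "(k1, x1)" "(k2, x2)" "(k3, x3)"] show ?thesis
    using assms unfolding P_def by simp
qed

lemma triangle_cost_le_delta:
  assumes "kind_admissible k1 x1" "kind_admissible k2 x2" "kind_admissible k3 x3"
    and "triangle_feasible x1 x2 x3 t"
  shows "triangle_cost k1 k2 k3 x1 x2 x3 t \<le> triangle_delta k1 k2 k3 x1 x2 x3 t"
  using triangle_feasible_nonneg(1-3)[OF assms(4)] cleared_excess_nonpos[OF assms]
  by (intro triangle_cost_le_delta_if_cleared_excess_nonpos) simp_all

theorem lemma4:
  fixes V :: "'a set" and Ep :: "'a set set"
    and z :: "'a set \<Rightarrow> real" and x :: "'a set \<Rightarrow> real"
    and u v w :: 'a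
  assumes "finite V"
    and "Ep \<subseteq> {{a, b} | a b. a \<in> V \<and> b \<in> V \<and> a \<noteq> b}"
    and "cluster_LP_feasible V z x"
    and "u \<in> V" "v \<in> V" "w \<in> V"
    and "u \<noteq> v" "u \<noteq> w" "v \<noteq> w"
  shows "cost_tri V Ep z x u v w \<le> delta_tri V Ep z x u v w"
proof -
  define t where "t = triple_mass V z u v w"
  have sample_u: "pivot_sample {S. S \<subseteq> V \<and> u \<in> S} z v w (x {u, v}) (x {u, w}) t"
    using pivot_sample_cluster_LP[of V z x u v w] assms by (simp add: t_def)
  have sample_v: "pivot_sample {S. S \<subseteq> V \<and> v \<in> S} z u w (x {v, u}) (x {v, w}) t"
    using pivot_sample_cluster_LP[of V z x v u w] assms by (simp add: t_def triple_mass_def insert_commute)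
  have sample_w: "pivot_sample {S. S \<subseteq> V \<and> w \<in> S} z u v (x {w, u}) (x {w, v}) t"
    using pivot_sample_cluster_LP[of V z x w u v] assms by (simp add: t_def triple_mass_def insert_commute)
  let ?k = "kind_of Ep x"
  let ?params = "\<lambda>f. f (?k {u, v}) (?k {u, w}) (?k {v, w}) (x {u, v}) (x {u, w}) (x {v, w}) t"
  have "cost_tri V Ep z x u v w = ?params triangle_cost"
    using sample_u sample_v sample_w
    by (simp add: cost_tri_def triangle_cost_def cost_piv_eq_pivot_cost insert_commute)
  moreover have "delta_tri V Ep z x u v w = ?params triangle_delta"
    using sample_u sample_v sample_w
    by (simp add: delta_tri_def triangle_delta_def delta_piv_eq_hit_prob insert_commute)
  moreover have "triangle_feasible (x {u, v}) (x {u, w}) (x {v, w}) t"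
    using pivot_sample.triple_mass_bounds[OF sample_u] pivot_sample.triple_mass_bounds[OF sample_v]
      pivot_sample.triple_mass_bounds[OF sample_w]
    unfolding triangle_feasible_def by (simp add: insert_commute)
  then have "?params triangle_cost \<le> ?params triangle_delta"
    by (intro triangle_cost_le_delta kind_admissible_kind_of)
  ultimately show ?thesis
    by simp
qed

end
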